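(* For variables $a,b,\alpha,\beta$, any natural number $n\ge1$ and any admissible $r$ ($0\le r\le\lfloor n/2\rfloor$ for $\Psi$, $0\le r\le\lfloor (n-1)/2\rfloor$ for $\Phi$), \[ \Psi\left(\begin{array}{cc|c} a & b & n \\ \alpha & \beta & r \end{array}\right)=\frac{(-1)^r}{r!}\Big(\alpha\frac{\partial}{\partial a}+\beta\frac{\partial}{\partial b}\Big)^r\Psi(a,b,n)=\frac{(-1)^r}{(\lfloor n/2\rfloor-r)!}\Big(a\frac{\partial}{\partial \alpha}+b\frac{\partial}{\partial \beta}\Big)^{\lfloor n/2\rfloor-r}\Psi(\alpha,\beta,n), \] \[ \Phi\left(\begin{array}{cc|c} a & b & n \\ \alpha & \beta & r \end{array}\right)=\frac{(-1)^r}{r!}\Big(\alpha\frac{\partial}{\partial a}+\beta\frac{\partial}{\partial b}\Big)^r\Phi(a,b,n)=\frac{(-1)^r}{(\lfloor (n-1)/2\rfloor-r)!}\Big(a\frac{\partial}{\partial \alpha}+b\frac{\partial}{\partial \beta}\Big)^{\lfloor (n-1)/2\rfloor-r}\Phi(\alpha,\beta,n). \]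
   Context: $\delta(m)=1$ for $m$ odd, $0$ for $m$ even; $\lfloor\cdot\rfloor$ is the floor. $\Psi(a,b,n)$, $\Phi(a,b,n)$ are the polynomials in $a,b$ defined by $\Psi(a,b,0)=2$, $\Psi(a,b,1)=1$, $\Psi(a,b,n+1)=(2a-b)^{\delta(n)}\Psi(a,b,n)-a\Psi(a,b,n-1)$ and $\Phi(a,b,0)=0$, $\Phi(a,b,1)=1$, $\Phi(a,b,n+1)=(2a-b)^{\delta(n+1)}\Phi(a,b,n)-a\Phi(a,b,n-1)$. For indeterminates $a,b,\alpha,\beta$ and $n\ge1$, $\Psi\left(\begin{array}{cc|c} a & b & n \\ \alpha & \beta & r \end{array}\right)$ and $\Phi\left(\begin{array}{cc|c} a & b & n \\ \alpha & \beta & r \end{array}\right)$ are the unique polynomials in $\mathbb{Z}[a,b,\alpha,\beta]$ such that, identically in $x,y$, $(\beta a-\alpha b)^{\lfloor n/2\rfloor}\frac{x^n+y^n}{(x+y)^{\delta(n)}}=\sum_{r=0}^{\lfloor n/2\rfloor}\Psi\left(\begin{array}{cc|c} a & b & n \\ \alpha & \beta & r \end{array}\right)(\alpha x^2+\beta xy+\alpha y^2)^{\lfloor n/2\rfloor-r}(ax^2+bxy+ay^2)^r$ and $(\beta a-\alpha b)^{\lfloor (n-1)/2\rfloor}\frac{x^n-y^n}{(x-y)(x+y)^{\delta(n-1)}}=\sum_{r=0}^{\lfloor (n-1)/2\rfloor}\Phi\left(\begin{array}{cc|c} a & b & n \\ \alpha & \beta & r \end{array}\right)(\alpha x^2+\beta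 xy+\alpha y^2)^{\lfloor (n-1)/2\rfloor-r}(ax^2+bxy+ay^2)^r$. *)

theory Defs
  imports "HOL-Computational_Algebra.Polynomial"
begin

text \<open>Polynomials in Z[a,b,alpha,beta] are represented as nested univariate
polynomials: the outermost variable is beta, then alpha, then b, innermost a.\<close>

type_synonym mp4 = "int poly poly poly poly"

definition Xbeta :: mp4 where "Xbeta = [:0, 1:]"
definition Xalpha :: mp4 where "Xalpha = [:[:0, 1:]:]"
definition Xb :: mp4 where "Xb = [:[:[:0, 1:]:]:]"
definition Xa :: mp4 where "Xa = [:[:[:[:0, 1:]:]:]:]"

definition Dbeta :: "mp4 \<Rightarrow> mp4" where "Dbeta p = pderiv p"
definition Dalpha :: "mp4 \<Rightarrow> mp4" where "Dalpha p = map_poly pderiv p"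
definition Db :: "mp4 \<Rightarrow> mp4" where "Db p = map_poly (map_poly pderiv) p"
definition Da :: "mp4 \<Rightarrow> mp4" where "Da p = map_poly (map_poly (map_poly pderiv)) p"

definition L1 :: "mp4 \<Rightarrow> mp4" where "L1 p = Xalpha * Da p + Xbeta * Db p"
definition L2 :: "mp4 \<Rightarrow> mp4" where "L2 p = Xa * Dalpha p + Xb * Dbeta p"

definition delta :: "nat \<Rightarrow> nat" where "delta m = (if odd m then 1 else 0)"

fun Psi :: "'a::comm_ring_1 \<Rightarrow> 'a \<Rightarrow> nat \<Rightarrow> 'a" where
  "Psi a b 0 = 2"
| "Psi a b (Suc 0) = 1"
| "Psi a b (Suc (Suc n)) =
     (2 * a - b) ^ delta (Suc n) * Psi a b (Suc n) - a * Psi a b n"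

fun Phi :: "'a::comm_ring_1 \<Rightarrow> 'a \<Rightarrow> nat \<Rightarrow> 'a" where
  "Phi a b 0 = 0"
| "Phi a b (Suc 0) = 1"
| "Phi a b (Suc (Suc n)) =
     (2 * a - b) ^ delta (Suc (Suc n)) * Phi a b (Suc n) - a * Phi a b n"

definition Qab :: "mp4 \<Rightarrow> mp4 \<Rightarrow> mp4" where
  "Qab x y = Xalpha * x^2 + Xbeta * x * y + Xalpha * y^2"
definition Qa :: "mp4 \<Rightarrow> mp4 \<Rightarrow> mp4" where
  "Qa x y = Xa * x^2 + Xb * x * y + Xa * y^2"

text \<open>The bracket polynomials, as the unique coefficient families
(indexed by r, zero beyond the admissible range) satisfying the defining
identity for all x, y (division by (x+y)^delta, (x-y) cleared).\<close>
definition PsiBr :: "nat \<Rightarrow> nat \<Rightarrow> mp4" where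
  "PsiBr n = (THE c. (\<forall>r > n div 2. c r = 0) \<and>
     (\<forall>x y. (Xbeta * Xa - Xalpha * Xb) ^ (n div 2) * (x ^ n + y ^ n) =
        (x + y) ^ delta n *
        (\<Sum>r\<le>n div 2. c r * Qab x y ^ (n div 2 - r) * Qa x y ^ r)))"

definition PhiBr :: "nat \<Rightarrow> nat \<Rightarrow> mp4" where
  "PhiBr n = (THE c. (\<forall>r > (n - 1) div 2. c r = 0) \<and>
     (\<forall>x y. (Xbeta * Xa - Xalpha * Xb) ^ ((n - 1) div 2) * (x ^ n - y ^ n) =
        (x - y) * (x + y) ^ delta (n - 1) *
        (\<Sum>r\<le>(n - 1) div 2. c r * Qab x y ^ ((n - 1) div 2 - r) * Qa x y ^ r)))"

end

theory Submission
  imports Defs "HOL-Computational_Algebra.Polynomial_Factorial"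
begin

text \<open>
With a = xy and b = -(x^2 + y^2) the recurrence for Psi is the one satisfied by power sums, so
x^n + y^n = (x + y)^delta(n) Psi(xy, -(x^2 + y^2), n), and likewise x^n - y^n for Phi. Psi is
weighted homogeneous of weight floor(n/2), and (beta a - alpha b) xy and -(beta a - alpha b)(x^2 + y^2)
are the linear combinations a U - alpha V and b U - beta V of the two quadratic forms
U = alpha x^2 + beta xy + alpha y^2 and V = a x^2 + b xy + a y^2. Hence the bracket polynomials are
the coefficients of P(t) = Psi(a - alpha t, b - beta t, n), read as a binary form of degree floor(n/2)
in U and V; they are unique because this binary form is then known at the infinitely many pairwise
non-proportional points (U, V) obtained from (x, y) = (k, 1).

Both pderiv and -L1 are derivations, and they agree on a - alpha t and b - beta t, hence on P. So
P' = -L1 P coefficientwise, and the coefficients of P are the Taylor coefficients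
(-1)^r L1^r Psi(a, b, n) / r!. Exchanging the roles of the two quadratic forms reverses the binary
form, and the same argument with L2 gives the second expression.
\<close>

section \<open>Power sums and homogeneity\<close>

lemma delta_Suc_Suc [simp]: "delta (Suc (Suc n)) = delta n"
  by (simp add: delta_def)

lemma power_Suc_delta_Suc:
  fixes s :: "'a::comm_monoid_mult"
  shows "s ^ Suc (delta (Suc n)) = s ^ delta n * (s\<^sup>2) ^ delta (Suc n)"
  by (simp add: delta_def power2_eq_square)

lemma power_sum_eq_Psi:
  fixes x y :: "'a::comm_ring_1"
  shows "x ^ n + y ^ n = (x + y) ^ delta n * Psi (x * y) (- (x\<^sup>2 + y\<^sup>2)) n"
proof (induction n rule: induct_nat_012)
  case (ge2 n)
  let ?s = "x + y" and ?P = "Psi (x * y) (- (x\<^sup>2 + y\<^sup>2))"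
  have "x ^ Suc (Suc n) + y ^ Suc (Suc n) = ?s * (x ^ Suc n + y ^ Suc n) - x * y * (x ^ n + y ^ n)"
    by (simp add: algebra_simps)
  also have "\<dots> = ?s ^ Suc (delta (Suc n)) * ?P (Suc n) - x * y * ?s ^ delta n * ?P n"
    unfolding ge2 by (simp add: algebra_simps)
  also have "\<dots> = ?s ^ delta n * ((?s\<^sup>2) ^ delta (Suc n) * ?P (Suc n) - x * y * ?P n)"
    unfolding power_Suc_delta_Suc by (simp add: algebra_simps)
  also have "\<dots> = ?s ^ delta (Suc (Suc n)) * ?P (Suc (Suc n))"
    by (simp add: algebra_simps power2_eq_square)
  finally show ?case .
qed (auto simp: delta_def)

lemma power_diff_eq_Phi:
  fixes x y :: "'a::comm_ring_1"
  shows "x ^ n - y ^ n = (x - y) * (x + y) ^ delta (n - 1) * Phi (x * y) (- (x\<^sup>2 + y\<^sup>2)) n"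
proof (induction n rule: induct_nat_012)
  case (ge2 n)
  let ?s = "x + y" and ?P = "Phi (x * y) (- (x\<^sup>2 + y\<^sup>2))"
  show ?case
  proof (cases n)
    case 0
    then show ?thesis by (simp add: algebra_simps power2_eq_square delta_def)
  next
    case (Suc k)
    have "x ^ Suc (Suc n) - y ^ Suc (Suc n) = ?s * (x ^ Suc n - y ^ Suc n) - x * y * (x ^ n - y ^ n)"
      by (simp add: algebra_simps)
    also have "\<dots> = (x - y) * (?s ^ Suc (delta (Suc k)) * ?P (Suc n) - x * y * ?s ^ delta k * ?P n)"
      unfolding ge2 by (simp add: Suc algebra_simps)
    also have "\<dots> = (x - y) * ?s ^ delta k * ((?s\<^sup>2) ^ delta (Suc k) * ?P (Suc n) - x * y * ?P n)"
      unfolding power_Suc_delta_Suc by (simp add: algebra_simps)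
    also have "\<dots> = (x - y) * ?s ^ delta (Suc (Suc n) - 1) * ?P (Suc (Suc n))"
      by (simp add: Suc algebra_simps power2_eq_square)
    finally show ?thesis .
  qed
qed (auto simp: delta_def)

lemma Psi_mult_homogeneous:
  fixes t :: "'a::comm_ring_1"
  shows "Psi (t * a) (t * b) n = t ^ (n div 2) * Psi a b n"
proof (induction n rule: induct_nat_012)
  case (ge2 n)
  have weight: "delta (Suc n) + Suc n div 2 = Suc (n div 2)"
    by (simp add: delta_def)
  have "Psi (t * a) (t * b) (Suc (Suc n))
      = (t * (2 * a - b)) ^ delta (Suc n) * (t ^ (Suc n div 2) * Psi a b (Suc n))
        - t * a * (t ^ (n div 2) * Psi a b n)"
    unfolding Psi.simps ge2 by (simp add: algebra_simps)
  also have "\<dots> = t ^ (delta (Suc n) + Suc n div 2) * ((2 * a - b) ^ delta (Suc n) * Psi a b (Suc n))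
        - t ^ Suc (n div 2) * (a * Psi a b n)"
    by (simp add: power_mult_distrib power_add ac_simps)
  also have "\<dots> = t ^ (Suc (Suc n) div 2) * Psi a b (Suc (Suc n))"
    unfolding weight by (simp add: right_diff_distrib)
  finally show ?case .
qed simp_all

lemma Phi_mult_homogeneous:
  fixes t :: "'a::comm_ring_1"
  shows "Phi (t * a) (t * b) n = t ^ ((n - 1) div 2) * Phi a b n"
proof (induction n rule: induct_nat_012)
  case (ge2 n)
  show ?case
  proof (cases n)
    case 0
    then show ?thesis by (simp add: delta_def)
  next
    case (Suc k)
    have weight: "delta n + Suc k div 2 = Suc (k div 2)"
      by (simp add: Suc delta_def)
    have "Phi (t * a) (t * b) (Suc (Suc n))
        = (t * (2 * a - b)) ^ delta n * (t ^ (Suc k div 2) * Phi a b (Suc n))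
          - t * a * (t ^ (k div 2) * Phi a b n)"
      unfolding Phi.simps ge2 by (simp add: Suc algebra_simps)
    also have "\<dots> = t ^ (delta n + Suc k div 2) * ((2 * a - b) ^ delta n * Phi a b (Suc n))
        - t ^ Suc (k div 2) * (a * Phi a b n)"
      by (simp add: power_mult_distrib power_add ac_simps)
    also have "\<dots> = t ^ ((Suc (Suc n) - 1) div 2) * Phi a b (Suc (Suc n))"
      unfolding weight by (simp add: Suc right_diff_distrib)
    finally show ?thesis .
  qed
qed simp_all

section \<open>Binary forms\<close>

definition binary_form :: "nat \<Rightarrow> (nat \<Rightarrow> 'a::comm_semiring_1) \<Rightarrow> 'a \<Rightarrow> 'a \<Rightarrow> 'a" where
  "binary_form d c U V = (\<Sum>r\<le>d. c r * U ^ (d - r) * V ^ r)"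

lemma binary_form_diff:
  fixes c c' :: "nat \<Rightarrow> 'a::comm_ring_1"
  shows "binary_form d (\<lambda>r. c r - c' r) U V = binary_form d c U V - binary_form d c' U V"
  by (simp add: binary_form_def left_diff_distrib sum_subtractf)

lemma binary_form_coeff_diff:
  fixes p q :: "'a::comm_ring_1 poly"
  shows "binary_form d (coeff (p - q)) U V = binary_form d (coeff p) U V - binary_form d (coeff q) U V"
  by (simp add: binary_form_def left_diff_distrib sum_subtractf)

lemma binary_form_scale: "binary_form m (\<lambda>r. t * c r) U V = t * binary_form m c U V"
  by (simp add: binary_form_def sum_distrib_left mult.assoc)

lemma binary_form_swap: "binary_form m c V U = binary_form m (\<lambda>r. c (m - r)) U V"
  unfolding binary_form_def
  by (rule sum.reindex_bij_witness[where i="\<lambda>r. m - r" and j="\<lambda>r. m - r"]) (auto simp: mult_ac)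

lemma binary_form_coeffs_unique:
  fixes c c' :: "nat \<Rightarrow> 'a::idom"
  assumes K: "infinite K"
    and U_nz: "\<And>k. k \<in> K \<Longrightarrow> U k \<noteq> 0"
    and nonprop: "\<And>j k. j \<in> K \<Longrightarrow> k \<in> K \<Longrightarrow> V j * U k = V k * U j \<Longrightarrow> j = k"
    and eq: "\<And>k. k \<in> K \<Longrightarrow> binary_form m c (U k) (V k) = binary_form m c' (U k) (V k)"
    and "r \<le> m"
  shows "c r = c' r"
proof -
  define w where "w k = to_fract (V k) / to_fract (U k)" for k
  define q where "q = (\<Sum>i\<le>m. monom (to_fract (c i - c' i)) i)"
  have root: "poly q (w k) = 0" if k: "k \<in> K" for k
  proof -
    have to_fract_power: "to_fract (x ^ j) = to_fract x ^ j" for x :: 'a and j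
      by (induction j) simp_all
    have "to_fract (U k) ^ m * poly q (w k)
        = (\<Sum>i\<le>m. to_fract (c i - c' i) * (to_fract (U k) ^ m * w k ^ i))"
      by (simp add: q_def poly_sum poly_monom sum_distrib_left algebra_simps)
    also have "\<dots> = (\<Sum>i\<le>m. to_fract (c i - c' i) * (to_fract (U k) ^ (m - i) * to_fract (V k) ^ i))"
    proof (rule sum.cong[OF refl])
      fix i assume "i \<in> {..m}"
      then have "to_fract (U k) ^ m = to_fract (U k) ^ (m - i) * to_fract (U k) ^ i"
        by (simp flip: power_add)
      then show "to_fract (c i - c' i) * (to_fract (U k) ^ m * w k ^ i)
          = to_fract (c i - c' i) * (to_fract (U k) ^ (m - i) * to_fract (V k) ^ i)"
        using U_nz[OF k] by (simp add: w_def power_divide)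
    qed
    also have "\<dots> = to_fract (\<Sum>i\<le>m. (c i - c' i) * U k ^ (m - i) * V k ^ i)"
      by (simp add: to_fract_power mult.assoc)
    also have "\<dots> = 0"
      using eq[OF k] by (simp flip: binary_form_def add: binary_form_diff)
    finally show ?thesis
      using U_nz[OF k] by simp
  qed
  have "inj_on w K"
    by (rule inj_onI) (use U_nz nonprop in \<open>simp add: w_def field_simps flip: to_fract_mult\<close>)
  then have "infinite (w ` K)"
    using K finite_imageD by blast
  moreover have "w ` K \<subseteq> {x. poly q x = 0}"
    using root by auto
  ultimately have "q = 0"
    using poly_roots_finite finite_subset by blast
  then have "coeff q r = 0"
    by simp
  then show ?thesis
    using \<open>r \<le> m\<close> by (simp add: q_def coeff_sum)
qed

lemma degree_linear_power_mult:
  assumes "degree p \<le> d"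
  shows "degree ([:A0, A1:] ^ j * p) \<le> d + j"
proof -
  have "degree ([:A0, A1:] ^ j) \<le> j"
    using degree_power_le[of "[:A0, A1:]" j] by (simp add: order_trans)
  then show ?thesis
    using degree_mult_le[of "[:A0, A1:] ^ j" p] assms by linarith
qed

lemma binary_form_linear_mult:
  assumes "degree p \<le> d"
  shows "binary_form (Suc d) (coeff ([:A0, A1:] * p)) U V = (A0 * U + A1 * V) * binary_form d (coeff p) U V"
proof -
  have "coeff p (Suc d) = 0"
    using assms by (simp add: coeff_eq_0)
  then have "binary_form (Suc d) (coeff (smult A0 p)) U V = A0 * U * binary_form d (coeff p) U V"
    unfolding binary_form_def by (simp add: sum_distrib_left Suc_diff_le algebra_simps)
  moreover have "binary_form (Suc d) (coeff (pCons 0 (smult A1 p))) U V = A1 * V * binary_form d (coeff p) U V"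
    unfolding binary_form_def sum.atMost_Suc_shift by (simp add: sum_distrib_left algebra_simps)
  moreover have "[:A0, A1:] * p = smult A0 p + pCons 0 (smult A1 p)"
    by (simp add: mult_pCons_left)
  ultimately show ?thesis
    unfolding binary_form_def by (simp add: sum.distrib distrib_right)
qed

lemma binary_form_linear_power_mult:
  assumes "degree p \<le> d"
  shows "binary_form (d + j) (coeff ([:A0, A1:] ^ j * p)) U V = (A0 * U + A1 * V) ^ j * binary_form d (coeff p) U V"
proof (induction j)
  case (Suc j)
  have "binary_form (d + Suc j) (coeff ([:A0, A1:] ^ Suc j * p)) U V
      = binary_form (Suc (d + j)) (coeff ([:A0, A1:] * ([:A0, A1:] ^ j * p))) U V"
    by (simp only: power_Suc mult.assoc add_Suc_right)
  also have "\<dots> = (A0 * U + A1 * V) * binary_form (d + j) (coeff ([:A0, A1:] ^ j * p)) U V"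
    using assms by (intro binary_form_linear_mult degree_linear_power_mult)
  also have "\<dots> = (A0 * U + A1 * V) ^ Suc j * binary_form d (coeff p) U V"
    by (simp only: Suc.IH power_Suc mult.assoc)
  finally show ?case .
qed simp

section \<open>Substituting linear polynomials\<close>

lemma linear_poly_two_mult_diff:
  fixes A0 :: "'a::comm_ring_1"
  shows "2 * [:A0, A1:] - [:B0, B1:] = [:2 * A0 - B0, 2 * A1 - B1:]"
  unfolding mult_2 by simp

lemma degree_Psi_linear: "degree (Psi [:A0, A1:] [:B0, B1:] n) \<le> n div 2"
proof (induction n rule: induct_nat_012)
  case (ge2 n)
  have "Suc n div 2 + delta (Suc n) = Suc (Suc n) div 2" "n div 2 + 1 = Suc (Suc n) div 2"
    by (simp_all add: delta_def)
  moreover have "degree ([:2 * A0 - B0, 2 * A1 - B1:] ^ delta (Suc n) * Psi [:A0, A1:] [:B0, B1:] (Suc n))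
      \<le> Suc n div 2 + delta (Suc n)"
    using ge2(2) by (rule degree_linear_power_mult)
  moreover have "degree ([:A0, A1:] ^ 1 * Psi [:A0, A1:] [:B0, B1:] n) \<le> n div 2 + 1"
    using ge2(1) by (rule degree_linear_power_mult)
  ultimately show ?case
    unfolding Psi.simps linear_poly_two_mult_diff power_one_right
    by (intro degree_diff_le) simp_all
qed simp_all

lemma Psi_linear_eq_binary_form:
  "Psi (A0 * U + A1 * V) (B0 * U + B1 * V) n
     = binary_form (n div 2) (coeff (Psi [:A0, A1:] [:B0, B1:] n)) U V"
proof (induction n rule: induct_nat_012)
  case 0
  then show ?case by (simp add: binary_form_def numeral_poly)
next
  case 1
  then show ?case by (simp add: binary_form_def)
next
  case (ge2 n)
  let ?P = "Psi [:A0, A1:] [:B0, B1:]" and ?Psi = "Psi (A0 * U + A1 * V) (B0 * U + B1 * V)"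
  have "Suc n div 2 + delta (Suc n) = Suc (Suc n) div 2" "n div 2 + 1 = Suc (Suc n) div 2"
    by (simp_all add: delta_def)
  moreover have "binary_form (Suc n div 2 + delta (Suc n))
        (coeff ([:2 * A0 - B0, 2 * A1 - B1:] ^ delta (Suc n) * ?P (Suc n))) U V
      = ((2 * A0 - B0) * U + (2 * A1 - B1) * V) ^ delta (Suc n) * ?Psi (Suc n)"
    unfolding ge2 by (rule binary_form_linear_power_mult[OF degree_Psi_linear])
  moreover have "binary_form (n div 2 + 1) (coeff ([:A0, A1:] ^ 1 * ?P n)) U V
      = (A0 * U + A1 * V) ^ 1 * ?Psi n"
    unfolding ge2 by (rule binary_form_linear_power_mult[OF degree_Psi_linear])
  moreover have "2 * (A0 * U + A1 * V) - (B0 * U + B1 * V) = (2 * A0 - B0) * U + (2 * A1 - B1) * V"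
    by (simp add: algebra_simps)
  ultimately show ?case
    unfolding Psi.simps linear_poly_two_mult_diff binary_form_coeff_diff power_one_right
    by metis
qed

lemma degree_Phi_linear: "degree (Phi [:A0, A1:] [:B0, B1:] n) \<le> (n - 1) div 2"
proof (induction n rule: induct_nat_012)
  case (ge2 n)
  show ?case
  proof (cases "n = 0")
    case True
    then show ?thesis by (simp add: delta_def)
  next
    case False
    then have "(Suc n - 1) div 2 + delta (Suc (Suc n)) = (Suc (Suc n) - 1) div 2"
      "(n - 1) div 2 + 1 = (Suc (Suc n) - 1) div 2"
      by (simp_all add: delta_def)
    moreover have "degree ([:2 * A0 - B0, 2 * A1 - B1:] ^ delta (Suc (Suc n)) * Phi [:A0, A1:] [:B0, B1:] (Suc n))
        \<le> (Suc n - 1) div 2 + delta (Suc (Suc n))"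
      using ge2(2) by (rule degree_linear_power_mult)
    moreover have "degree ([:A0, A1:] ^ 1 * Phi [:A0, A1:] [:B0, B1:] n) \<le> (n - 1) div 2 + 1"
      using ge2(1) by (rule degree_linear_power_mult)
    ultimately show ?thesis
      unfolding Phi.simps linear_poly_two_mult_diff power_one_right
      by (intro degree_diff_le) simp_all
  qed
qed simp_all

lemma Phi_linear_eq_binary_form:
  "Phi (A0 * U + A1 * V) (B0 * U + B1 * V) n
     = binary_form ((n - 1) div 2) (coeff (Phi [:A0, A1:] [:B0, B1:] n)) U V"
proof (induction n rule: induct_nat_012)
  case 0
  then show ?case by (simp add: binary_form_def)
next
  case 1
  then show ?case by (simp add: binary_form_def)
next
  case (ge2 n)
  let ?P = "Phi [:A0, A1:] [:B0, B1:]" and ?Phi = "Phi (A0 * U + A1 * V) (B0 * U + B1 * V)"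
  show ?case
  proof (cases "n = 0")
    case True
    then show ?thesis by (simp add: binary_form_def delta_def)
  next
    case False
    then have "(Suc n - 1) div 2 + delta (Suc (Suc n)) = (Suc (Suc n) - 1) div 2"
      "(n - 1) div 2 + 1 = (Suc (Suc n) - 1) div 2"
      by (simp_all add: delta_def)
    moreover have "binary_form ((Suc n - 1) div 2 + delta (Suc (Suc n)))
          (coeff ([:2 * A0 - B0, 2 * A1 - B1:] ^ delta (Suc (Suc n)) * ?P (Suc n))) U V
        = ((2 * A0 - B0) * U + (2 * A1 - B1) * V) ^ delta (Suc (Suc n)) * ?Phi (Suc n)"
      unfolding ge2 by (rule binary_form_linear_power_mult[OF degree_Phi_linear])
    moreover have "binary_form ((n - 1) div 2 + 1) (coeff ([:A0, A1:] ^ 1 * ?P n)) U V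
        = (A0 * U + A1 * V) ^ 1 * ?Phi n"
      unfolding ge2 by (rule binary_form_linear_power_mult[OF degree_Phi_linear])
    moreover have "2 * (A0 * U + A1 * V) - (B0 * U + B1 * V) = (2 * A0 - B0) * U + (2 * A1 - B1) * V"
      by (simp add: algebra_simps)
    ultimately show ?thesis
      unfolding Phi.simps linear_poly_two_mult_diff binary_form_coeff_diff power_one_right
      by metis
  qed
qed

lemma coeff_Psi_linear_reflect:
  fixes A :: "'a::{idom, ring_char_0}"
  assumes "r \<le> n div 2"
  shows "coeff (Psi [:A, - A':] [:B, - B':] n) r
    = (-1) ^ (n div 2) * coeff (Psi [:A', - A:] [:B', - B:] n) (n div 2 - r)"
proof (rule binary_form_coeffs_unique[where K=UNIV and U="\<lambda>_. 1" and V=of_nat, OF _ _ _ _ assms])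
  fix k :: nat
  let ?m = "n div 2" and ?t = "of_nat k :: 'a"
  have "binary_form ?m (coeff (Psi [:A, - A':] [:B, - B':] n)) 1 ?t = Psi (A * 1 + - A' * ?t) (B * 1 + - B' * ?t) n"
    by (rule Psi_linear_eq_binary_form[symmetric])
  also have "\<dots> = Psi ((-1) * (A' * ?t + - A * 1)) ((-1) * (B' * ?t + - B * 1)) n"
    by (simp add: algebra_simps)
  also have "\<dots> = (-1) ^ ?m * binary_form ?m (coeff (Psi [:A', - A:] [:B', - B:] n)) ?t 1"
    by (simp only: Psi_mult_homogeneous Psi_linear_eq_binary_form)
  finally show "binary_form ?m (coeff (Psi [:A, - A':] [:B, - B':] n)) 1 ?t
      = binary_form ?m (\<lambda>r. (-1) ^ ?m * coeff (Psi [:A', - A:] [:B', - B:] n) (?m - r)) 1 ?t"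
    by (simp add: binary_form_scale binary_form_swap[of _ _ ?t])
qed simp_all

lemma coeff_Phi_linear_reflect:
  fixes A :: "'a::{idom, ring_char_0}"
  assumes "r \<le> (n - 1) div 2"
  shows "coeff (Phi [:A, - A':] [:B, - B':] n) r
    = (-1) ^ ((n - 1) div 2) * coeff (Phi [:A', - A:] [:B', - B:] n) ((n - 1) div 2 - r)"
proof (rule binary_form_coeffs_unique[where K=UNIV and U="\<lambda>_. 1" and V=of_nat, OF _ _ _ _ assms])
  fix k :: nat
  let ?m = "(n - 1) div 2" and ?t = "of_nat k :: 'a"
  have "binary_form ?m (coeff (Phi [:A, - A':] [:B, - B':] n)) 1 ?t = Phi (A * 1 + - A' * ?t) (B * 1 + - B' * ?t) n"
    by (rule Phi_linear_eq_binary_form[symmetric])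
  also have "\<dots> = Phi ((-1) * (A' * ?t + - A * 1)) ((-1) * (B' * ?t + - B * 1)) n"
    by (simp add: algebra_simps)
  also have "\<dots> = (-1) ^ ?m * binary_form ?m (coeff (Phi [:A', - A:] [:B', - B:] n)) ?t 1"
    by (simp only: Phi_mult_homogeneous Phi_linear_eq_binary_form)
  finally show "binary_form ?m (coeff (Phi [:A, - A':] [:B, - B':] n)) 1 ?t
      = binary_form ?m (\<lambda>r. (-1) ^ ?m * coeff (Phi [:A', - A:] [:B', - B:] n) (?m - r)) 1 ?t"
    by (simp add: binary_form_scale binary_form_swap[of _ _ ?t])
qed simp_all

section \<open>Derivations and Taylor coefficients\<close>

definition derivation :: "('a::comm_ring_1 \<Rightarrow> 'a) \<Rightarrow> bool" where
  "derivation D \<longleftrightarrow> (\<forall>x y. D (x + y) = D x + D y) \<and> (\<forall>x y. D (x * y) = x * D y + D x * y)"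

lemma derivation_add: "derivation D \<Longrightarrow> D (x + y) = D x + D y"
  by (simp add: derivation_def)

lemma derivation_mult: "derivation D \<Longrightarrow> D (x * y) = x * D y + D x * y"
  by (simp add: derivation_def)

lemma derivation_0: "derivation D \<Longrightarrow> D 0 = 0"
  using derivation_add[of D 0 0] by simp

lemma derivation_1: "derivation D \<Longrightarrow> D 1 = 0"
  using derivation_mult[of D 1 1] by simp

lemma derivation_uminus: "derivation D \<Longrightarrow> D (- x) = - D x"
  using derivation_add[of D x "- x"] derivation_0[of D] by (simp add: eq_neg_iff_add_eq_0 add.commute)

lemma derivation_diff: "derivation D \<Longrightarrow> D (x - y) = D x - D y"
  using derivation_add[of D x "- y"] derivation_uminus[of D y] by simp

lemma derivation_of_nat_mult: "derivation D \<Longrightarrow> D (of_nat k * x) = of_nat k * D x"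
  by (induction k) (simp_all add: derivation_add derivation_0 algebra_simps)

lemma derivation_uminus_fun: "derivation D \<Longrightarrow> derivation (\<lambda>x. - D x)"
  by (simp add: derivation_def algebra_simps)

lemma derivation_lincomb:
  "derivation D1 \<Longrightarrow> derivation D2 \<Longrightarrow> derivation (\<lambda>x. c * D1 x + d * D2 x)"
  by (simp add: derivation_def algebra_simps)

lemma derivation_pderiv: "derivation (pderiv :: 'a::idom poly \<Rightarrow> 'a poly)"
  by (simp add: derivation_def pderiv_add pderiv_mult algebra_simps)

lemma derivation_map_poly:
  assumes D: "derivation D"
  shows "derivation (map_poly D)"
  unfolding derivation_def
proof (intro conjI allI)
  fix x y :: "'a poly"
  have D0: "D 0 = 0"
    using D by (rule derivation_0)
  show "map_poly D (x + y) = map_poly D x + map_poly D y"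
    by (rule poly_eqI) (simp add: coeff_map_poly D0 derivation_add[OF D])
  have D_sum: "D (sum f A) = (\<Sum>a\<in>A. D (f a))" for f :: "nat \<Rightarrow> 'a" and A
    by (induction A rule: infinite_finite_induct) (simp_all add: D0 derivation_add[OF D])
  show "map_poly D (x * y) = x * map_poly D y + map_poly D x * y"
    by (rule poly_eqI)
      (simp add: coeff_map_poly coeff_mult D0 D_sum derivation_mult[OF D] sum.distrib)
qed

lemma derivation_equalizer:
  assumes "derivation D1" "derivation D2"
  shows "D1 1 = D2 1"
    and "D1 x = D2 x \<Longrightarrow> D1 y = D2 y \<Longrightarrow> D1 (x - y) = D2 (x - y)"
    and "D1 x = D2 x \<Longrightarrow> D1 y = D2 y \<Longrightarrow> D1 (x * y) = D2 (x * y)"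
  using assms by (simp_all add: derivation_1 derivation_diff derivation_mult)

lemma Psi_in_subring:
  assumes one: "1 \<in> S" and "A \<in> S" "B \<in> S"
    and diff: "\<And>x y. x \<in> S \<Longrightarrow> y \<in> S \<Longrightarrow> x - y \<in> S"
    and mult: "\<And>x y. x \<in> S \<Longrightarrow> y \<in> S \<Longrightarrow> x * y \<in> S"
  shows "Psi A B n \<in> S"
proof -
  have "0 \<in> S"
    using diff[OF one one] by simp
  then have "1 - (0 - 1) \<in> S"
    by (intro diff one)
  then have two: "2 \<in> S"
    by simp
  have power: "x ^ k \<in> S" if "x \<in> S" for x k
    using that by (induction k) (simp_all add: one mult)
  have "2 * A - B \<in> S"
    using assms two by blast
  then show ?thesis
    by (induction n rule: induct_nat_012) (simp_all add: one two diff mult power assms)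
qed

lemma Phi_in_subring:
  assumes one: "1 \<in> S" and "A \<in> S" "B \<in> S"
    and diff: "\<And>x y. x \<in> S \<Longrightarrow> y \<in> S \<Longrightarrow> x - y \<in> S"
    and mult: "\<And>x y. x \<in> S \<Longrightarrow> y \<in> S \<Longrightarrow> x * y \<in> S"
  shows "Phi A B n \<in> S"
proof -
  have zero: "0 \<in> S"
    using diff[OF one one] by simp
  then have "1 - (0 - 1) \<in> S"
    by (intro diff one)
  then have two: "2 \<in> S"
    by simp
  have power: "x ^ k \<in> S" if "x \<in> S" for x k
    using that by (induction k) (simp_all add: one mult)
  have "2 * A - B \<in> S"
    using assms two by blast
  then show ?thesis
    by (induction n rule: induct_nat_012) (simp_all add: zero one diff mult power assms)
qed

lemma derivations_agree_on_Psi: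
  assumes "derivation D1" "derivation D2" "D1 A = D2 A" "D1 B = D2 B"
  shows "D1 (Psi A B n) = D2 (Psi A B n)"
  using Psi_in_subring[of "{x. D1 x = D2 x}" A B n] derivation_equalizer[OF assms(1,2)] assms(3,4)
  by simp

lemma derivations_agree_on_Phi:
  assumes "derivation D1" "derivation D2" "D1 A = D2 A" "D1 B = D2 B"
  shows "D1 (Phi A B n) = D2 (Phi A B n)"
  using Phi_in_subring[of "{x. D1 x = D2 x}" A B n] derivation_equalizer[OF assms(1,2)] assms(3,4)
  by simp

lemma coeff_Taylor_derivation:
  assumes L: "derivation L" and P: "pderiv P = - map_poly L P"
  shows "of_nat (fact k) * coeff P k = (-1) ^ k * (L ^^ k) (coeff P 0)"
proof (induction k)
  case (Suc k)
  have "of_nat (Suc k) * coeff P (Suc k) = coeff (pderiv P) k"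
    by (simp add: coeff_pderiv)
  also have "\<dots> = - L (coeff P k)"
    unfolding P by (simp add: coeff_map_poly derivation_0[OF L])
  finally have step: "of_nat (Suc k) * coeff P (Suc k) = - L (coeff P k)" .
  have "of_nat (fact (Suc k)) * coeff P (Suc k) = of_nat (fact k) * (of_nat (Suc k) * coeff P (Suc k))"
    by (simp add: algebra_simps)
  also have "\<dots> = - L (of_nat (fact k) * coeff P k)"
    unfolding step by (simp add: derivation_of_nat_mult[OF L])
  also have "\<dots> = (-1) ^ Suc k * (L ^^ Suc k) (coeff P 0)"
    unfolding Suc.IH by (cases "even k") (simp_all add: derivation_uminus[OF L])
  finally show ?case .
qed simp

lemma pderiv_linear_eq_derivation:
  assumes L: "derivation L" and "L C = C'" "L C' = 0"
  shows "pderiv [:C, - C':] = - map_poly L [:C, - C':]"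
  using assms by (simp add: pderiv_pCons map_poly_pCons derivation_uminus[OF L] derivation_0[OF L])

lemma poly_Psi: "poly (Psi A B n) x = Psi (poly A x) (poly B x) n"
  by (induction n rule: induct_nat_012) simp_all

lemma poly_Phi: "poly (Phi A B n) x = Phi (poly A x) (poly B x) n"
  by (induction n rule: induct_nat_012) simp_all

lemma Psi_shift_coeff:
  fixes L :: "'a::idom \<Rightarrow> 'a"
  assumes L: "derivation L" and "L A = A'" "L B = B'" "L A' = 0" "L B' = 0"
  shows "of_nat (fact k) * coeff (Psi [:A, - A':] [:B, - B':] n) k = (-1) ^ k * (L ^^ k) (Psi A B n)"
proof -
  have "derivation (\<lambda>p. - map_poly L p)"
    using L by (intro derivation_uminus_fun derivation_map_poly)
  then have "pderiv (Psi [:A, - A':] [:B, - B':] n) = - map_poly L (Psi [:A, - A':] [:B, - B':] n)"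
    using pderiv_linear_eq_derivation[OF L assms(2,4)] pderiv_linear_eq_derivation[OF L assms(3,5)]
    by (rule derivations_agree_on_Psi[OF derivation_pderiv])
  moreover have "coeff (Psi [:A, - A':] [:B, - B':] n) 0 = Psi A B n"
    by (simp flip: poly_0_coeff_0 add: poly_Psi)
  ultimately show ?thesis
    using coeff_Taylor_derivation[OF L] by metis
qed

lemma Phi_shift_coeff:
  fixes L :: "'a::idom \<Rightarrow> 'a"
  assumes L: "derivation L" and "L A = A'" "L B = B'" "L A' = 0" "L B' = 0"
  shows "of_nat (fact k) * coeff (Phi [:A, - A':] [:B, - B':] n) k = (-1) ^ k * (L ^^ k) (Phi A B n)"
proof -
  have "derivation (\<lambda>p. - map_poly L p)"
    using L by (intro derivation_uminus_fun derivation_map_poly)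
  then have "pderiv (Phi [:A, - A':] [:B, - B':] n) = - map_poly L (Phi [:A, - A':] [:B, - B':] n)"
    using pderiv_linear_eq_derivation[OF L assms(2,4)] pderiv_linear_eq_derivation[OF L assms(3,5)]
    by (rule derivations_agree_on_Phi[OF derivation_pderiv])
  moreover have "coeff (Phi [:A, - A':] [:B, - B':] n) 0 = Phi A B n"
    by (simp flip: poly_0_coeff_0 add: poly_Phi)
  ultimately show ?thesis
    using coeff_Taylor_derivation[OF L] by metis
qed

section \<open>The bracket polynomials\<close>

lemma derivation_L1: "derivation L1"
proof -
  have eq: "L1 = (\<lambda>p. Xalpha * map_poly (map_poly (map_poly pderiv)) p + Xbeta * map_poly (map_poly pderiv) p)"
    by (simp add: fun_eq_iff L1_def Da_def Db_def)
  show ?thesis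
    unfolding eq by (intro derivation_lincomb derivation_map_poly derivation_pderiv)
qed

lemma derivation_L2: "derivation L2"
proof -
  have eq: "L2 = (\<lambda>p. Xa * map_poly pderiv p + Xb * pderiv p)"
    by (simp add: fun_eq_iff L2_def Dalpha_def Dbeta_def)
  show ?thesis
    unfolding eq by (intro derivation_lincomb derivation_map_poly derivation_pderiv)
qed

lemma L1_generators: "L1 Xa = Xalpha" "L1 Xb = Xbeta" "L1 Xalpha = 0" "L1 Xbeta = 0"
  by (simp_all add: L1_def Da_def Db_def Xa_def Xb_def Xalpha_def Xbeta_def map_poly_pCons pderiv_pCons
      map_poly_1 flip: one_pCons)

lemma L2_generators: "L2 Xalpha = Xa" "L2 Xbeta = Xb" "L2 Xa = 0" "L2 Xb = 0"
  by (simp_all add: L2_def Dalpha_def Dbeta_def Xa_def Xb_def Xalpha_def Xbeta_def map_poly_pCons pderiv_pCons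
      map_poly_1)

lemma Qab_Qa_separating:
  fixes j k :: nat
  assumes "j \<ge> 2" "k \<ge> 2"
  shows "Qab (of_nat k) 1 \<noteq> 0"
    and "Qa (of_nat j) 1 * Qab (of_nat k) 1 = Qa (of_nat k) 1 * Qab (of_nat j) 1 \<Longrightarrow> j = k"
proof -
  \<comment> \<open>evaluation at beta = 1, alpha = 0, b = 0, a = 1 (outermost variable first)\<close>
  define ev :: "mp4 \<Rightarrow> int" where "ev p = poly (poly (poly (poly p 1) 0) 0) 1" for p
  have ev_mult: "ev (p * q) = ev p * ev q" for p q
    by (simp add: ev_def)
  have ev_Qab: "ev (Qab (of_nat i) 1) = int i" for i
    by (simp add: ev_def Qab_def Xalpha_def Xbeta_def)
  have ev_Qa: "ev (Qa (of_nat i) 1) = int i ^ 2 + 1" for i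
    by (simp add: ev_def Qa_def Xa_def Xb_def)
  show "Qab (of_nat k) 1 \<noteq> 0"
    using ev_Qab[of k] assms(2) by (auto simp: ev_def)
  assume "Qa (of_nat j) 1 * Qab (of_nat k) 1 = Qa (of_nat k) 1 * Qab (of_nat j) 1"
  then have "ev (Qa (of_nat j) 1) * ev (Qab (of_nat k) 1) = ev (Qa (of_nat k) 1) * ev (Qab (of_nat j) 1)"
    by (simp flip: ev_mult)
  then have "(int j ^ 2 + 1) * int k = (int k ^ 2 + 1) * int j"
    by (simp only: ev_Qab ev_Qa)
  then have "(int j - int k) * (int j * int k - 1) = 0"
    by (simp add: algebra_simps power2_eq_square)
  moreover have "int j * int k \<ge> 2 * 2"
    using assms by (intro mult_mono) auto
  ultimately show "j = k"
    by simp
qed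

lemma binary_form_Qab_Qa_unique:
  assumes "\<And>k::nat. k \<ge> 2 \<Longrightarrow>
      binary_form m c (Qab (of_nat k) 1) (Qa (of_nat k) 1) = binary_form m c' (Qab (of_nat k) 1) (Qa (of_nat k) 1)"
    and "r \<le> m"
  shows "c r = c' r"
proof (rule binary_form_coeffs_unique[where K="{2..}" and U="\<lambda>k. Qab (of_nat k) 1" and V="\<lambda>k. Qa (of_nat k) 1"])
  show "infinite {2::nat..}"
    by (rule infinite_Ici)
qed (use Qab_Qa_separating assms in simp_all)

lemma PsiBr_eqI:
  assumes vanish: "\<forall>r > n div 2. c r = 0"
    and identity: "\<And>x y. (Xbeta * Xa - Xalpha * Xb) ^ (n div 2) * (x ^ n + y ^ n)
      = (x + y) ^ delta n * binary_form (n div 2) c (Qab x y) (Qa x y)"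
  shows "PsiBr n = c"
  unfolding PsiBr_def
proof (rule the_equality)
  fix c'
  assume c': "(\<forall>r > n div 2. c' r = 0) \<and> (\<forall>x y. (Xbeta * Xa - Xalpha * Xb) ^ (n div 2) * (x ^ n + y ^ n)
      = (x + y) ^ delta n * (\<Sum>r\<le>n div 2. c' r * Qab x y ^ (n div 2 - r) * Qa x y ^ r))"
  show "c' = c"
  proof
    fix r
    show "c' r = c r"
    proof (cases "r \<le> n div 2")
      case True
      show ?thesis
      proof (rule binary_form_Qab_Qa_unique[OF _ True])
        fix k :: nat
        let ?F = "(of_nat k + 1 :: mp4) ^ delta n"
        have "?F \<noteq> 0"
          using of_nat_neq_0[of k, where 'a=mp4] by (simp add: add.commute)
        moreover have "?F * binary_form (n div 2) c' (Qab (of_nat k) 1) (Qa (of_nat k) 1)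
            = ?F * binary_form (n div 2) c (Qab (of_nat k) 1) (Qa (of_nat k) 1)"
          using c' identity[of "of_nat k" 1] unfolding binary_form_def by metis
        ultimately show "binary_form (n div 2) c' (Qab (of_nat k) 1) (Qa (of_nat k) 1)
            = binary_form (n div 2) c (Qab (of_nat k) 1) (Qa (of_nat k) 1)"
          by (rule mult_left_cancel[THEN iffD1])
      qed
    next
      case False
      then show ?thesis
        using c' vanish by simp
    qed
  qed
qed (use vanish identity in \<open>simp add: binary_form_def\<close>)

lemma PhiBr_eqI:
  assumes vanish: "\<forall>r > (n - 1) div 2. c r = 0"
    and identity: "\<And>x y. (Xbeta * Xa - Xalpha * Xb) ^ ((n - 1) div 2) * (x ^ n - y ^ n)
      = (x - y) * (x + y) ^ delta (n - 1) * binary_form ((n - 1) div 2) c (Qab x y) (Qa x y)"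
  shows "PhiBr n = c"
  unfolding PhiBr_def
proof (rule the_equality)
  fix c'
  assume c': "(\<forall>r > (n - 1) div 2. c' r = 0) \<and> (\<forall>x y. (Xbeta * Xa - Xalpha * Xb) ^ ((n - 1) div 2) * (x ^ n - y ^ n)
      = (x - y) * (x + y) ^ delta (n - 1) * (\<Sum>r\<le>(n - 1) div 2. c' r * Qab x y ^ ((n - 1) div 2 - r) * Qa x y ^ r))"
  show "c' = c"
  proof
    fix r
    show "c' r = c r"
    proof (cases "r \<le> (n - 1) div 2")
      case True
      show ?thesis
      proof (rule binary_form_Qab_Qa_unique[OF _ True])
        fix k :: nat
        assume "k \<ge> 2"
        let ?F = "(of_nat k - 1 :: mp4) * (of_nat k + 1) ^ delta (n - 1)"
        have "?F \<noteq> 0"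
          using \<open>k \<ge> 2\<close> of_nat_neq_0[of k, where 'a=mp4] of_nat_eq_1_iff[of k, where 'a=mp4]
          by (simp add: add.commute)
        moreover have "?F * binary_form ((n - 1) div 2) c' (Qab (of_nat k) 1) (Qa (of_nat k) 1)
            = ?F * binary_form ((n - 1) div 2) c (Qab (of_nat k) 1) (Qa (of_nat k) 1)"
          using c' identity[of "of_nat k" 1] unfolding binary_form_def by metis
        ultimately show "binary_form ((n - 1) div 2) c' (Qab (of_nat k) 1) (Qa (of_nat k) 1)
            = binary_form ((n - 1) div 2) c (Qab (of_nat k) 1) (Qa (of_nat k) 1)"
          by (rule mult_left_cancel[THEN iffD1])
      qed
    next
      case False
      then show ?thesis
        using c' vanish by simp
    qed
  qed
qed (use vanish identity in \<open>simp add: binary_form_def\<close>)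

lemma cramer_Qab_Qa:
  shows "(Xbeta * Xa - Xalpha * Xb) * (x * y) = Xa * Qab x y + - Xalpha * Qa x y"
    and "(Xbeta * Xa - Xalpha * Xb) * - (x\<^sup>2 + y\<^sup>2) = Xb * Qab x y + - Xbeta * Qa x y"
  by (simp_all add: Qab_def Qa_def algebra_simps power2_eq_square)

lemma PsiBr_eq_coeff: "PsiBr n = coeff (Psi [:Xa, - Xalpha:] [:Xb, - Xbeta:] n)"
proof (rule PsiBr_eqI)
  show "\<forall>r > n div 2. coeff (Psi [:Xa, - Xalpha:] [:Xb, - Xbeta:] n) r = 0"
    using degree_Psi_linear[of Xa "- Xalpha" Xb "- Xbeta" n] by (auto intro!: coeff_eq_0)
  fix x y :: mp4
  let ?D = "Xbeta * Xa - Xalpha * Xb"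
  have "?D ^ (n div 2) * (x ^ n + y ^ n) = (x + y) ^ delta n * (?D ^ (n div 2) * Psi (x * y) (- (x\<^sup>2 + y\<^sup>2)) n)"
    by (subst power_sum_eq_Psi) (simp only: mult_ac)
  also have "?D ^ (n div 2) * Psi (x * y) (- (x\<^sup>2 + y\<^sup>2)) n = Psi (?D * (x * y)) (?D * - (x\<^sup>2 + y\<^sup>2)) n"
    by (rule Psi_mult_homogeneous[symmetric])
  also have "\<dots> = binary_form (n div 2) (coeff (Psi [:Xa, - Xalpha:] [:Xb, - Xbeta:] n)) (Qab x y) (Qa x y)"
    unfolding cramer_Qab_Qa by (rule Psi_linear_eq_binary_form)
  finally show "?D ^ (n div 2) * (x ^ n + y ^ n)
      = (x + y) ^ delta n * binary_form (n div 2) (coeff (Psi [:Xa, - Xalpha:] [:Xb, - Xbeta:] n)) (Qab x y) (Qa x y)" .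
qed

lemma PhiBr_eq_coeff: "PhiBr n = coeff (Phi [:Xa, - Xalpha:] [:Xb, - Xbeta:] n)"
proof (rule PhiBr_eqI)
  show "\<forall>r > (n - 1) div 2. coeff (Phi [:Xa, - Xalpha:] [:Xb, - Xbeta:] n) r = 0"
    using degree_Phi_linear[of Xa "- Xalpha" Xb "- Xbeta" n] by (auto intro!: coeff_eq_0)
  fix x y :: mp4
  let ?D = "Xbeta * Xa - Xalpha * Xb"
  have "?D ^ ((n - 1) div 2) * (x ^ n - y ^ n)
      = (x - y) * (x + y) ^ delta (n - 1) * (?D ^ ((n - 1) div 2) * Phi (x * y) (- (x\<^sup>2 + y\<^sup>2)) n)"
    by (subst power_diff_eq_Phi) (simp only: mult_ac)
  also have "?D ^ ((n - 1) div 2) * Phi (x * y) (- (x\<^sup>2 + y\<^sup>2)) n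
      = Phi (?D * (x * y)) (?D * - (x\<^sup>2 + y\<^sup>2)) n"
    by (rule Phi_mult_homogeneous[symmetric])
  also have "\<dots> = binary_form ((n - 1) div 2) (coeff (Phi [:Xa, - Xalpha:] [:Xb, - Xbeta:] n)) (Qab x y) (Qa x y)"
    unfolding cramer_Qab_Qa by (rule Phi_linear_eq_binary_form)
  finally show "?D ^ ((n - 1) div 2) * (x ^ n - y ^ n) = (x - y) * (x + y) ^ delta (n - 1)
      * binary_form ((n - 1) div 2) (coeff (Phi [:Xa, - Xalpha:] [:Xb, - Xbeta:] n)) (Qab x y) (Qa x y)" .
qed

lemma minus_one_power_mult_diff:
  assumes "r \<le> m"
  shows "(-1) ^ m * (-1) ^ (m - r) = ((-1) ^ r :: 'a::comm_ring_1)"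
proof -
  have "(-1) ^ m = ((-1) ^ r * (-1) ^ (m - r) :: 'a)"
    using assms by (simp flip: power_add)
  then show ?thesis
    by (simp add: mult.assoc)
qed

lemma fact_mult_PsiBr_L1: "of_nat (fact r) * PsiBr n r = (-1) ^ r * (L1 ^^ r) (Psi Xa Xb n)"
  unfolding PsiBr_eq_coeff by (rule Psi_shift_coeff[OF derivation_L1 L1_generators])

lemma fact_mult_PhiBr_L1: "of_nat (fact r) * PhiBr n r = (-1) ^ r * (L1 ^^ r) (Phi Xa Xb n)"
  unfolding PhiBr_eq_coeff by (rule Phi_shift_coeff[OF derivation_L1 L1_generators])

lemma fact_mult_PsiBr_L2:
  assumes "r \<le> n div 2"
  shows "of_nat (fact (n div 2 - r)) * PsiBr n r = (-1) ^ r * (L2 ^^ (n div 2 - r)) (Psi Xalpha Xbeta n)"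
proof -
  let ?m = "n div 2"
  have "of_nat (fact (?m - r)) * PsiBr n r
      = (-1) ^ ?m * (of_nat (fact (?m - r)) * coeff (Psi [:Xalpha, - Xa:] [:Xbeta, - Xb:] n) (?m - r))"
    unfolding PsiBr_eq_coeff coeff_Psi_linear_reflect[OF assms] by (simp only: mult_ac)
  also have "\<dots> = ((-1) ^ ?m * (-1) ^ (?m - r)) * (L2 ^^ (?m - r)) (Psi Xalpha Xbeta n)"
    by (simp only: Psi_shift_coeff[OF derivation_L2 L2_generators] mult.assoc)
  finally show ?thesis
    by (simp only: minus_one_power_mult_diff[OF assms])
qed

lemma fact_mult_PhiBr_L2:
  assumes "r \<le> (n - 1) div 2"
  shows "of_nat (fact ((n - 1) div 2 - r)) * PhiBr n r
    = (-1) ^ r * (L2 ^^ ((n - 1) div 2 - r)) (Phi Xalpha Xbeta n)"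
proof -
  let ?m = "(n - 1) div 2"
  have "of_nat (fact (?m - r)) * PhiBr n r
      = (-1) ^ ?m * (of_nat (fact (?m - r)) * coeff (Phi [:Xalpha, - Xa:] [:Xbeta, - Xb:] n) (?m - r))"
    unfolding PhiBr_eq_coeff coeff_Phi_linear_reflect[OF assms] by (simp only: mult_ac)
  also have "\<dots> = ((-1) ^ ?m * (-1) ^ (?m - r)) * (L2 ^^ (?m - r)) (Phi Xalpha Xbeta n)"
    by (simp only: Phi_shift_coeff[OF derivation_L2 L2_generators] mult.assoc)
  finally show ?thesis
    by (simp only: minus_one_power_mult_diff[OF assms])
qed

theorem theorem8p4:
  fixes n :: nat
  assumes "n \<ge> 1"
  shows "(\<forall>r \<le> n div 2.
            of_nat (fact r) * PsiBr n r = (-1) ^ r * (L1 ^^ r) (Psi Xa Xb n) \<and>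
            of_nat (fact (n div 2 - r)) * PsiBr n r =
              (-1) ^ r * (L2 ^^ (n div 2 - r)) (Psi Xalpha Xbeta n))
       \<and> (\<forall>r \<le> (n - 1) div 2.
            of_nat (fact r) * PhiBr n r = (-1) ^ r * (L1 ^^ r) (Phi Xa Xb n) \<and>
            of_nat (fact ((n - 1) div 2 - r)) * PhiBr n r =
              (-1) ^ r * (L2 ^^ ((n - 1) div 2 - r)) (Phi Xalpha Xbeta n))"
  \<comment> \<open>the identities hold for n = 0 as well\<close>
  using fact_mult_PsiBr_L1 fact_mult_PsiBr_L2 fact_mult_PhiBr_L1 fact_mult_PhiBr_L2 by blast

end
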